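(* Let $x\in[0,1]^d$ and $0<h<R$. Under Assumption (A3), there exist $1\le i,j\le l$ such that $B_2(x,h)\subset\overline{M_i}\cup\overline{M_j}$.
   Context: $M_1,\dots,M_l$ are disjoint open subsets of $[0,1]^d$ with $\bigcup_i\overline{M_i}=[0,1]^d$. Assumption (A3): $\Gamma:=\bigcup_{i=1}^l\partial M_i\cap]0,1[^d$ is a $C^{1,1}$ hypersurface with $\operatorname{reach}(\Gamma)\ge R$ and Hausdorff distance $d_2(\Gamma,\partial[0,1]^d)\ge R$, where $\operatorname{reach}(A)$ is the supremum of $r$ such that every $x\notin A$ with $\operatorname{dist}(x,A)<r$ has a unique nearest point in $A$. $B_2(x,h)=\{y\in[0,1]^d:\|x-y\|_2\le h\}$. *)

theory Defs
  imports "HOL-Analysis.Analysis"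
begin

text \<open>Reach of a set (Federer): the supremum of all r such that every point x outside A
  whose distance to A is less than r has a unique nearest point in A.
  "dist(x,A) < r" is written as "some point of A is closer than r", so that the
  usual convention dist(x,{}) = infinity is respected (reach of the empty set is infinite).\<close>
definition reach :: "'a::metric_space set \<Rightarrow> ereal" where
  "reach A = Sup {ereal r | r. \<forall>x. x \<notin> A \<and> (\<exists>a\<in>A. dist x a < r) \<longrightarrow>
       (\<exists>!y. y \<in> A \<and> (\<forall>a\<in>A. dist x y \<le> dist x a))}"

definition C11_hypersurface :: "'a::euclidean_space set \<Rightarrow> bool" where
  "C11_hypersurface G \<longleftrightarrow>
     (\<forall>p\<in>G. \<exists>U (f::'a \<Rightarrow> real) f' L. open U \<and> p \<in> U \<and>
        (\<forall>y\<in>U. (f has_derivative f' y) (at y)) \<and>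
        (\<forall>y\<in>U. \<forall>z\<in>U. \<forall>v. \<bar>f' y v - f' z v\<bar> \<le> L * dist y z * norm v) \<and>
        (\<forall>y\<in>U. \<exists>v. f' y v \<noteq> 0) \<and>
        G \<inter> U = {y\<in>U. f y = 0})"

end

theory Submission
  imports Defs
begin

(* Near a point p of the interface, the interface is the regular zero set of a C^{1,1} function f.
   On a small cylinder around p whose axis points in a direction of increase of f, the sets
   {f > 0} and {f < 0} are connected, avoid the interface and contain every zero of f in their
   closure; hence each lies in a single region, and the set of regions adjacent to a point of the
   interface is locally constant along the interface. Since the reach of the interface is at least R,
   points within distance R of it have a unique nearest point on it, and the nearest-point map is
   continuous. It maps the segment between two interface points at distance less than 2R onto a
   connected part of the interface, so both points are adjacent to the same regions. Finally, if
   two distinct regions meet a ball of radius h < R, then the segment between them crosses the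
   interface inside the ball; so every region meeting the ball is adjacent to one and the same
   interface point, and there are at most two such regions. *)

section \<open>Sign sets of a function increasing along a direction\<close>

lemma increasing_along_direction:
  fixes f :: "'a::real_normed_vector \<Rightarrow> real"
  assumes "convex S"
    and der: "\<And>y. y \<in> S \<Longrightarrow> (f has_derivative f' y) (at y)"
    and pos: "\<And>y. y \<in> S \<Longrightarrow> 0 < f' y n"
    and y: "y \<in> S" "y + t *\<^sub>R n \<in> S" and t: "0 < t"
  shows "f y < f (y + t *\<^sub>R n)"
proof -
  have on_line: "y + s *\<^sub>R n \<in> S" if "0 \<le> s" "s \<le> t" for s
  proof -
    have "y + s *\<^sub>R n = (1 - s / t) *\<^sub>R y + (s / t) *\<^sub>R (y + t *\<^sub>R n)"
      using t by (simp add: algebra_simps)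
    then show ?thesis
      using convexD_alt[OF \<open>convex S\<close> y] that t by simp
  qed
  show ?thesis
  proof (rule DERIV_pos_imp_increasing[of 0 t "\<lambda>s. f (y + s *\<^sub>R n)", simplified])
    fix s assume s: "0 \<le> s" "s \<le> t"
    let ?y = "y + s *\<^sub>R n"
    have "((\<lambda>s. f (y + s *\<^sub>R n)) has_derivative (\<lambda>u. f' ?y (u *\<^sub>R n))) (at s)"
      by (rule has_derivative_compose[of "\<lambda>s. y + s *\<^sub>R n" "\<lambda>u. u *\<^sub>R n" s UNIV f])
         (auto intro!: derivative_eq_intros der on_line[OF s])
    moreover have "(\<lambda>u. f' ?y (u *\<^sub>R n)) = (*) (f' ?y n)"
      using has_derivative_linear[OF der[OF on_line[OF s]]]
      by (auto simp: linear_scale mult.commute)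
    ultimately have "DERIV (\<lambda>s. f (y + s *\<^sub>R n)) s :> f' ?y n"
      by (simp add: has_field_derivative_def)
    then show "\<exists>D. DERIV (\<lambda>s. f (y + s *\<^sub>R n)) s :> D \<and> 0 < D"
      using pos[OF on_line[OF s]] by blast
  qed (use t in simp)
qed

lemma min_le_on_direction_segment:
  fixes f :: "'a::real_normed_vector \<Rightarrow> real"
  assumes "convex S"
    and der: "\<And>y. y \<in> S \<Longrightarrow> (f has_derivative f' y) (at y)"
    and pos: "\<And>y. y \<in> S \<Longrightarrow> 0 < f' y n"
    and a: "a \<in> S" "a + s *\<^sub>R n \<in> S" and u: "u \<in> closed_segment a (a + s *\<^sub>R n)"
  shows "min (f a) (f (a + s *\<^sub>R n)) \<le> f u"
proof -
  have mono: "f y \<le> f (y + t *\<^sub>R n)" if "y \<in> S" "y + t *\<^sub>R n \<in> S" "0 \<le> t" for y t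
    using increasing_along_direction[OF \<open>convex S\<close> der pos that(1,2)] that(3)
    by (cases "t = 0") (auto intro: less_imp_le)
  obtain \<tau> where \<tau>: "0 \<le> \<tau>" "\<tau> \<le> 1" "u = a + (\<tau> * s) *\<^sub>R n"
    using u by (auto simp: in_segment algebra_simps)
  have uS: "u \<in> S"
    using closed_segment_subset[OF a \<open>convex S\<close>] u by blast
  show ?thesis
  proof (cases "0 \<le> s")
    case True
    then have "f a \<le> f u"
      using mono[OF a(1), of "\<tau> * s"] \<tau> uS by simp
    then show ?thesis by linarith
  next
    case False
    have "u + ((1 - \<tau>) * s) *\<^sub>R n = a + s *\<^sub>R n"
      using \<tau> by (simp add: algebra_simps)
    then have "f (a + s *\<^sub>R n) \<le> f u"
      using mono[OF a(2), of "(\<tau> - 1) * s"] \<tau> uS False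
      by (simp add: algebra_simps mult_nonneg_nonpos2)
    then show ?thesis by linarith
  qed
qed

lemma positive_directional_derivative_nearby:
  fixes f :: "'a::real_normed_vector \<Rightarrow> real"
  assumes "open U" "p \<in> U"
    and der: "\<And>y. y \<in> U \<Longrightarrow> (f has_derivative f' y) (at y)"
    and lip: "\<And>y z v. y \<in> U \<Longrightarrow> z \<in> U \<Longrightarrow> \<bar>f' y v - f' z v\<bar> \<le> L * dist y z * norm v"
    and v: "f' p v \<noteq> 0"
  obtains n r where "norm n = 1" "0 < r" "ball p r \<subseteq> U" "\<And>y. y \<in> ball p r \<Longrightarrow> 0 < f' y n"
proof -
  have lin: "linear (f' p)"
    using der[OF \<open>p \<in> U\<close>] by (rule has_derivative_linear)
  have "v \<noteq> 0"
    using v linear_0[OF lin] by auto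
  define n where "n = (sgn (f' p v) / norm v) *\<^sub>R v"
  have n1: "norm n = 1"
    using v \<open>v \<noteq> 0\<close> by (simp add: n_def abs_sgn)
  define c where "c = f' p n"
  have c: "c = \<bar>f' p v\<bar> / norm v"
    using v by (simp add: c_def n_def linear_scale[OF lin] abs_sgn mult.commute)
  then have "0 < c"
    using v \<open>v \<noteq> 0\<close> by simp
  obtain r0 where r0: "0 < r0" "ball p r0 \<subseteq> U"
    using \<open>open U\<close> \<open>p \<in> U\<close> open_contains_ball by blast
  define r where "r = min r0 (c / (\<bar>L\<bar> + 1))"
  have "0 < r" "ball p r \<subseteq> U"
    using r0 \<open>0 < c\<close> by (auto simp: r_def)
  moreover have "0 < f' y n" if y: "y \<in> ball p r" for y
  proof -
    have "\<bar>f' y n - c\<bar> \<le> L * dist y p"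
      using lip[of y p n] y \<open>ball p r \<subseteq> U\<close> \<open>p \<in> U\<close> n1 by (auto simp: c_def)
    also have "\<dots> \<le> \<bar>L\<bar> * (c / (\<bar>L\<bar> + 1))"
      using y by (intro mult_mono) (auto simp: r_def dist_commute)
    also have "\<dots> < c"
      using \<open>0 < c\<close> by (simp add: field_simps)
    finally show ?thesis by linarith
  qed
  ultimately show ?thesis using that n1 by blast
qed

definition cylinder :: "'a::real_inner \<Rightarrow> 'a \<Rightarrow> real \<Rightarrow> real \<Rightarrow> 'a set" where
  "cylinder p n c d = {z. \<bar>(z - p) \<bullet> n\<bar> < c \<and> norm ((z - p) - ((z - p) \<bullet> n) *\<^sub>R n) < d}"

lemma cylinder_uminus_axis [simp]: "cylinder p (- n) c d = cylinder p n c d"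
  by (simp add: cylinder_def)

lemma open_cylinder: "open (cylinder p n c d)"
  unfolding cylinder_def by (intro open_Collect_conj open_Collect_less continuous_intros)

lemma convex_cylinder: "convex (cylinder p n c d)"
proof -
  have "cylinder p n c d = {z. \<bar>(z - p) \<bullet> n\<bar> < c} \<inter> {z. norm ((z - p) - ((z - p) \<bullet> n) *\<^sub>R n) < d}"
    by (auto simp: cylinder_def)
  moreover have "{z. \<bar>(z - p) \<bullet> n\<bar> < c} = {z. n \<bullet> z < n \<bullet> p + c} \<inter> {z. n \<bullet> z > n \<bullet> p - c}"
    by (auto simp: inner_diff_left inner_commute[of n] abs_less_iff)
  then have "convex {z. \<bar>(z - p) \<bullet> n\<bar> < c}"
    by (simp add: convex_Int convex_halfspace_lt convex_halfspace_gt)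
  moreover have "convex {z. norm ((z - p) - ((z - p) \<bullet> n) *\<^sub>R n) < d}"
  proof -
    define P where "P w = w - (w \<bullet> n) *\<^sub>R n" for w
    have "linear P"
      by (rule linearI) (auto simp: P_def inner_add_left algebra_simps)
    moreover have "{z. norm ((z - p) - ((z - p) \<bullet> n) *\<^sub>R n) < d} = P -` ball (P p) d"
      by (auto simp: P_def dist_norm inner_diff_left algebra_simps norm_minus_commute)
    ultimately show ?thesis
      by (simp add: convex_linear_vimage)
  qed
  ultimately show ?thesis by (simp add: convex_Int)
qed

lemma cylinder_subset_ball:
  assumes "norm n = 1" "c + d \<le> r"
  shows "cylinder p n c d \<subseteq> ball p r"
proof
  fix z assume z: "z \<in> cylinder p n c d"
  have "norm (z - p) \<le> norm ((z - p) - ((z - p) \<bullet> n) *\<^sub>R n) + norm (((z - p) \<bullet> n) *\<^sub>R n)"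
    using norm_triangle_ineq[of "(z - p) - ((z - p) \<bullet> n) *\<^sub>R n" "((z - p) \<bullet> n) *\<^sub>R n"] by simp
  also have "\<dots> < r"
    using z assms by (simp add: cylinder_def)
  finally show "z \<in> ball p r"
    by (simp add: dist_norm norm_minus_commute)
qed

lemma center_in_cylinder: "0 < c \<Longrightarrow> 0 < d \<Longrightarrow> p \<in> cylinder p n c d"
  by (simp add: cylinder_def)

lemma connected_positive_part_cylinder:
  fixes f :: "'a::real_inner \<Rightarrow> real"
  assumes "norm n = 1"
    and der: "\<And>y. y \<in> cylinder p n c d \<Longrightarrow> (f has_derivative f' y) (at y)"
    and pos: "\<And>y. y \<in> cylinder p n c d \<Longrightarrow> 0 < f' y n"
    and "\<bar>t\<bar> < c"
    and top: "\<And>z. z \<in> ball (p + t *\<^sub>R n) d \<Longrightarrow> 0 < f z"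
  shows "connected {z \<in> cylinder p n c d. 0 < f z}"
proof -
  let ?C = "cylinder p n c d" and ?P = "{z \<in> cylinder p n c d. 0 < f z}"
  let ?pt = "p + t *\<^sub>R n"
  have nn: "n \<bullet> n = 1"
    using \<open>norm n = 1\<close> by (simp add: dot_square_norm)
  let ?K = "ball ?pt d \<inter> ?C"
  have K: "convex ?K" "?K \<subseteq> ?P"
    using top by (auto intro: convex_Int convex_cylinder)
  have "connected_component ?P z ?pt" if z: "z \<in> ?P" for z
  proof -
    \<comment> \<open>Slide z along the axis to height t: f stays positive on the way and ends up in ?K.\<close>
    define z' where "z' = z + (t - (z - p) \<bullet> n) *\<^sub>R n"
    have z'_pt: "z' - ?pt = (z - p) - ((z - p) \<bullet> n) *\<^sub>R n"
      by (simp add: z'_def algebra_simps)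
    have "z' \<in> ?C"
      using z z'_pt \<open>\<bar>t\<bar> < c\<close> by (auto simp: cylinder_def z'_def inner_add_left algebra_simps nn)
    moreover have "dist z' ?pt < d"
      using z unfolding dist_norm z'_pt by (simp add: cylinder_def)
    ultimately have z'K: "z' \<in> ?K" by (simp add: dist_commute)
    have "0 < d"
      using z by (simp add: cylinder_def) (meson norm_ge_zero le_less_trans)
    then have pt: "?pt \<in> ?K"
      using \<open>\<bar>t\<bar> < c\<close> by (simp add: cylinder_def nn)
    have "closed_segment z z' \<subseteq> ?P"
    proof
      fix u assume u: "u \<in> closed_segment z z'"
      have "u \<in> ?C"
        using closed_segment_subset[OF _ _ convex_cylinder] z \<open>z' \<in> ?C\<close> u by blast
      moreover have "min (f z) (f z') \<le> f u"
        using min_le_on_direction_segment[OF convex_cylinder[of p n c d] der pos, of z]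
          z \<open>z' \<in> ?C\<close> u by (simp add: z'_def)
      ultimately show "u \<in> ?P"
        using z K z'K by auto
    qed
    moreover have "connected (closed_segment z z' \<union> ?K)"
      using z'K by (intro connected_Un convex_connected K(1)) auto
    ultimately show ?thesis
      unfolding connected_component_def using K pt by blast
  qed
  then show ?thesis
    unfolding connected_iff_connected_component
    by (meson connected_component_sym connected_component_trans)
qed

lemma in_closure_positive_part:
  fixes f :: "'a::real_normed_vector \<Rightarrow> real"
  assumes "open S" "convex S"
    and der: "\<And>y. y \<in> S \<Longrightarrow> (f has_derivative f' y) (at y)"
    and pos: "\<And>y. y \<in> S \<Longrightarrow> 0 < f' y n"
    and "q \<in> S" "0 \<le> f q"
  shows "q \<in> closure {z \<in> S. 0 < f z}"
proof -
  have "((\<lambda>s. q + s *\<^sub>R n) \<longlongrightarrow> q + 0 *\<^sub>R n) (at_right 0)"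
    by (intro tendsto_intros)
  then have lim: "((\<lambda>s. q + s *\<^sub>R n) \<longlongrightarrow> q) (at_right 0)"
    by simp
  then have "\<forall>\<^sub>F s in at_right 0. q + s *\<^sub>R n \<in> S"
    using \<open>open S\<close> \<open>q \<in> S\<close> by (rule topological_tendstoD)
  then have "\<forall>\<^sub>F s in at_right 0. q + s *\<^sub>R n \<in> {z \<in> S. 0 < f z}"
    using eventually_at_right_less[of 0]
  proof eventually_elim
    case (elim s)
    then have "f q < f (q + s *\<^sub>R n)"
      using increasing_along_direction[OF \<open>convex S\<close> der pos \<open>q \<in> S\<close>] by blast
    with elim \<open>0 \<le> f q\<close> show ?case
      by simp
  qed
  then have "\<forall>\<^sub>F s in at_right 0. q + s *\<^sub>R n \<in> closure {z \<in> S. 0 < f z}"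
    by (rule eventually_mono) (erule closure_subset[THEN subsetD])
  then show ?thesis
    by (rule Lim_in_closed_set[OF closed_closure _ trivial_limit_at_right_real lim])
qed

lemma positive_ball_along_direction:
  fixes f :: "'a::real_normed_vector \<Rightarrow> real"
  assumes "norm n = 1" "0 < t" "t < r" "0 \<le> f p"
    and der: "\<And>y. y \<in> ball p r \<Longrightarrow> (f has_derivative f' y) (at y)"
    and pos: "\<And>y. y \<in> ball p r \<Longrightarrow> 0 < f' y n"
  obtains d where "0 < d" "\<And>z. z \<in> ball (p + t *\<^sub>R n) d \<Longrightarrow> 0 < f z"
proof -
  let ?pt = "p + t *\<^sub>R n"
  have "?pt \<in> ball p r" "p \<in> ball p r"
    using assms(1-3) by (auto simp: dist_norm)
  then have "0 < f ?pt"
    using increasing_along_direction[OF convex_ball der pos] assms(2,4) by fastforce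
  have "continuous_on (ball p r) f"
    using der by (meson has_derivative_continuous continuous_at_imp_continuous_on)
  then have "open (ball p r \<inter> f -` {0<..})"
    by (auto intro: continuous_open_preimage)
  moreover have "?pt \<in> ball p r \<inter> f -` {0<..}"
    using \<open>?pt \<in> ball p r\<close> \<open>0 < f ?pt\<close> by simp
  ultimately obtain d where "0 < d" "ball ?pt d \<subseteq> ball p r \<inter> f -` {0<..}"
    by (meson open_contains_ball_eq)
  then show ?thesis
    by (intro that[of d]) auto
qed

lemma zero_set_local_sides:
  fixes f :: "'a::euclidean_space \<Rightarrow> real"
  assumes n: "norm n = 1" and "0 < r" "f p = 0"
    and der: "\<And>y. y \<in> ball p r \<Longrightarrow> (f has_derivative f' y) (at y)"
    and pos: "\<And>y. y \<in> ball p r \<Longrightarrow> 0 < f' y n"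
  obtains V where "open V" "p \<in> V" "V \<subseteq> ball p r"
    "connected {z \<in> V. 0 < f z}" "connected {z \<in> V. f z < 0}"
    "\<And>q. q \<in> V \<Longrightarrow> f q = 0 \<Longrightarrow> q \<in> closure {z \<in> V. 0 < f z} \<inter> closure {z \<in> V. f z < 0}"
proof -
  \<comment> \<open>The negative side of f is the positive side of - f along - n.\<close>
  have der': "\<And>y. y \<in> ball p r \<Longrightarrow> ((\<lambda>z. - f z) has_derivative (\<lambda>w. - f' y w)) (at y)"
    using der by (intro derivative_intros)
  have pos': "0 < - f' y (- n)" if "y \<in> ball p r" for y
    using pos[OF that] linear_neg[OF has_derivative_linear[OF der[OF that]]] by simp
  have "0 < r / 4" "r / 4 < r" "0 \<le> f p" "0 \<le> - f p"
    using \<open>0 < r\<close> \<open>f p = 0\<close> by simp_all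
  obtain d1 where "0 < d1" and top: "\<And>z. z \<in> ball (p + (r / 4) *\<^sub>R n) d1 \<Longrightarrow> 0 < f z"
    using positive_ball_along_direction[OF n \<open>0 < r / 4\<close> \<open>r / 4 < r\<close> \<open>0 \<le> f p\<close> der pos] by blast
  obtain d2 where "0 < d2" and bottom: "\<And>z. z \<in> ball (p + (r / 4) *\<^sub>R - n) d2 \<Longrightarrow> 0 < - f z"
    using positive_ball_along_direction[OF _ \<open>0 < r / 4\<close> \<open>r / 4 < r\<close> \<open>0 \<le> - f p\<close> der' pos'] n by auto
  define d where "d = min (r / 2) (min d1 d2)"
  define V where "V = cylinder p n (r / 2) d"
  have "0 < d"
    using \<open>0 < r\<close> \<open>0 < d1\<close> \<open>0 < d2\<close> by (simp add: d_def)
  have "open V" "convex V" "p \<in> V"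
    using \<open>0 < r\<close> \<open>0 < d\<close> by (simp_all add: V_def open_cylinder convex_cylinder center_in_cylinder)
  have VB: "V \<subseteq> ball p r"
    using cylinder_subset_ball[OF n] by (simp add: V_def d_def)
  have "connected {z \<in> V. 0 < f z}"
    unfolding V_def using \<open>0 < r\<close> VB der pos top
    by (intro connected_positive_part_cylinder[OF n, where f' = f' and t = "r / 4"]) (auto simp: V_def d_def)
  moreover have "connected {z \<in> cylinder p (- n) (r / 2) d. 0 < - f z}"
    using \<open>0 < r\<close> VB der' pos' bottom n
    by (intro connected_positive_part_cylinder[where f' = "\<lambda>y w. - f' y w" and t = "r / 4"])
       (auto simp: V_def d_def)
  moreover have "q \<in> closure {z \<in> V. 0 < f z}" if "q \<in> V" "f q = 0" for q
    by (rule in_closure_positive_part[OF \<open>open V\<close> \<open>convex V\<close>, where f' = f' and n = n])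
       (use VB der pos that in auto)
  moreover have "q \<in> closure {z \<in> V. 0 < - f z}" if "q \<in> V" "f q = 0" for q
    by (rule in_closure_positive_part[OF \<open>open V\<close> \<open>convex V\<close>, where f' = "\<lambda>y w. - f' y w" and n = "- n"])
       (use VB der' pos' that in auto)
  ultimately show ?thesis
    using that \<open>open V\<close> \<open>p \<in> V\<close> VB by (simp add: V_def)
qed

section \<open>Nearest points\<close>

lemma unique_nearest_point_within_reach:
  assumes "ereal r \<le> reach A" "a \<in> A" "dist y a < r"
  shows "\<exists>!z. z \<in> A \<and> (\<forall>b\<in>A. dist y z \<le> dist y b)"
proof (cases "y \<in> A")
  case True
  show ?thesis
  proof (rule ex1I[of _ y])
    fix z assume "z \<in> A \<and> (\<forall>b\<in>A. dist y z \<le> dist y b)"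
    then have "dist y z \<le> 0"
      using True by fastforce
    then show "z = y" by simp
  qed (use True in simp)
next
  case False
  have "ereal (dist y a) < ereal r"
    using assms(3) by simp
  then have "ereal (dist y a) < reach A"
    using assms(1) by (rule less_le_trans)
  then obtain r' where "dist y a < r'" and "\<forall>x. x \<notin> A \<and> (\<exists>a\<in>A. dist x a < r') \<longrightarrow>
       (\<exists>!z. z \<in> A \<and> (\<forall>b\<in>A. dist x z \<le> dist x b))"
    unfolding reach_def less_Sup_iff by auto
  then show ?thesis
    using False \<open>a \<in> A\<close> by blast
qed

lemma continuous_on_unique_nearest_point:
  fixes G :: "'a::euclidean_space set"
  assumes "compact G" "closed T"
    and uniq: "\<And>y. y \<in> T \<Longrightarrow> \<exists>!z. z \<in> G \<and> (\<forall>b\<in>G. dist y z \<le> dist y b)"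
  shows "continuous_on T (\<lambda>y. THE z. z \<in> G \<and> (\<forall>b\<in>G. dist y z \<le> dist y b))"
proof (rule continuous_from_closed_graph[OF \<open>compact G\<close>])
  define P where "P y = (THE z. z \<in> G \<and> (\<forall>b\<in>G. dist y z \<le> dist y b))" for y
  have P: "P y \<in> G \<and> (\<forall>b\<in>G. dist y (P y) \<le> dist y b)" if "y \<in> T" for y
    unfolding P_def by (rule theI'[OF uniq[OF that]])
  have P_eq: "P y = z" if "y \<in> T" "z \<in> G" "\<forall>b\<in>G. dist y z \<le> dist y b" for y z
    unfolding P_def using the1_equality[OF uniq[OF that(1)]] that(2,3) by blast
  show "P \<in> T \<rightarrow> G"
    using P by blast
  have "(\<lambda>y. (y, P y)) ` T = (T \<times> G) \<inter> (\<Inter>b\<in>G. {w. dist (fst w) (snd w) \<le> dist (fst w) b})"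
    using P P_eq by (auto simp: image_iff)
  moreover have "closed \<dots>"
    using \<open>closed T\<close> compact_imp_closed[OF \<open>compact G\<close>]
    by (intro closed_Int closed_Times closed_INT ballI closed_Collect_le continuous_intros)
  ultimately show "closed ((\<lambda>y. (y, P y)) ` T)"
    by simp
qed

lemma cball_Int_convex_subset_closure:
  fixes S :: "'a::euclidean_space set"
  assumes "convex S" "x \<in> S" "0 < h"
  shows "cball x h \<inter> S \<subseteq> closure (ball x h \<inter> S)"
proof -
  have "x \<in> closure (rel_interior S)"
    using assms(1,2) convex_closure_rel_interior closure_subset by blast
  then have "ball x h \<inter> rel_interior S \<noteq> {}"
    using \<open>0 < h\<close> open_Int_closure_eq_empty[of "ball x h" "rel_interior S"] by force
  then have "closure (ball x h \<inter> S) = cball x h \<inter> closure S"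
    using closure_Int_convex[OF convex_ball \<open>convex S\<close>] \<open>0 < h\<close> by (simp add: rel_interior_open)
  then show ?thesis
    using closure_subset by blast
qed

section \<open>Partitions of the unit cube\<close>

locale cube_partition =
  fixes M :: "nat \<Rightarrow> 'a::euclidean_space set" and l :: nat
  assumes open_M: "\<forall>i\<in>{1..l}. openin (top_of_set (cbox 0 One)) (M i)"
    and disj_M: "\<forall>i\<in>{1..l}. \<forall>j\<in>{1..l}. i \<noteq> j \<longrightarrow> M i \<inter> M j = {}"
    and cover: "(\<Union>i\<in>{1..l}. closure (M i)) = cbox 0 One"
begin

definition interface :: "'a set" where
  "interface = (\<Union>i\<in>{1..l}. frontier (M i)) \<inter> box 0 One"

definition adjacent_regions :: "'a \<Rightarrow> nat set" where
  "adjacent_regions p = {i\<in>{1..l}. p \<in> closure (M i)}"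

lemma regions_nonempty: "{1..l} \<noteq> {}"
proof
  assume "{1..l} = {}"
  then have "cbox 0 One = ({} :: 'a set)"
    using cover by simp
  then show False by simp
qed

lemma open_region_Int_box: "i \<in> {1..l} \<Longrightarrow> open (M i \<inter> box 0 One)"
proof -
  assume "i \<in> {1..l}"
  then obtain W where "open W" "M i = cbox 0 One \<inter> W"
    using open_M by (meson openin_open)
  then have "M i \<inter> box 0 One = W \<inter> box 0 One"
    using box_subset_cbox by blast
  with \<open>open W\<close> show ?thesis by auto
qed

lemma closure_region_Int_box: "i \<in> {1..l} \<Longrightarrow> closure (M i \<inter> box 0 One) = closure (M i)"
proof -
  assume "i \<in> {1..l}"
  then obtain W where "open W" and W: "M i = cbox 0 One \<inter> W"
    using open_M by (meson openin_open)
  then have "M i \<subseteq> W \<inter> closure (box 0 One)"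
    by simp
  also have "\<dots> \<subseteq> closure (W \<inter> box 0 One)"
    using \<open>open W\<close> by (rule open_Int_closure_subset)
  also have "W \<inter> box 0 One = M i \<inter> box 0 One"
    using W box_subset_cbox by blast
  finally show ?thesis
    by (meson closure_minimal closure_mono closed_closure inf_le1 subset_antisym)
qed

lemma region_Int_interface: "c \<in> {1..l} \<Longrightarrow> M c \<inter> interface = {}"
proof (rule ccontr)
  assume "c \<in> {1..l}" "M c \<inter> interface \<noteq> {}"
  then obtain z k where z: "z \<in> M c \<inter> box 0 One" "k \<in> {1..l}" "z \<in> frontier (M k)"
    unfolding interface_def by blast
  then have "M c \<inter> box 0 One \<inter> closure (M k) \<noteq> {}"
    by (auto simp: frontier_def)
  then have "M c \<inter> box 0 One \<inter> M k \<noteq> {}"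
    using open_Int_closure_eq_empty open_region_Int_box[OF \<open>c \<in> {1..l}\<close>] by blast
  then have "k = c"
    using disj_M \<open>c \<in> {1..l}\<close> z(2) by blast
  moreover have "z \<in> interior (M c)"
    using z(1) open_region_Int_box[OF \<open>c \<in> {1..l}\<close>] interior_maximal[of "M c \<inter> box 0 One" "M c"] by blast
  ultimately show False
    using z(3) by (simp add: frontier_def)
qed

lemma box_minus_interface: "box 0 One - interface \<subseteq> (\<Union>i\<in>{1..l}. M i)"
proof
  fix z assume z: "z \<in> box 0 One - interface"
  then obtain k where "k \<in> {1..l}" "z \<in> closure (M k)"
    using cover box_subset_cbox by blast
  moreover have "z \<notin> frontier (M k)"
    using z \<open>k \<in> {1..l}\<close> by (auto simp: interface_def)
  ultimately have "z \<in> interior (M k)"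
    by (simp add: frontier_def)
  with \<open>k \<in> {1..l}\<close> show "z \<in> (\<Union>i\<in>{1..l}. M i)"
    using interior_subset by blast
qed

lemma connected_subset_some_region:
  assumes "connected C" "C \<subseteq> box 0 One - interface" "C \<noteq> {}"
  shows "\<exists>a\<in>{1..l}. C \<subseteq> M a"
proof -
  obtain a where "a \<in> {1..l}" "C \<inter> M a \<noteq> {}"
    using assms(2,3) box_minus_interface by blast
  let ?A = "M a \<inter> box 0 One" and ?B = "\<Union>k\<in>{1..l}-{a}. M k \<inter> box 0 One"
  have "C \<subseteq> ?A \<union> ?B"
    using assms(2) box_minus_interface by blast
  moreover have "?A \<inter> ?B \<inter> C = {}"
    using disj_M \<open>a \<in> {1..l}\<close> by blast
  moreover have "?A \<inter> C \<noteq> {}"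
    using assms(2) \<open>C \<inter> M a \<noteq> {}\<close> by blast
  moreover have "open ?A"
    using open_region_Int_box \<open>a \<in> {1..l}\<close> by blast
  moreover have "open ?B"
    using open_region_Int_box by (intro open_UN) blast
  ultimately have "?B \<inter> C = {}"
    using connectedD[OF \<open>connected C\<close> \<open>open ?A\<close> \<open>open ?B\<close>] by blast
  with \<open>C \<subseteq> ?A \<union> ?B\<close> \<open>a \<in> {1..l}\<close> show ?thesis
    by blast
qed

lemma adjacent_regions_eq_pair:
  assumes "open V" "V - interface \<subseteq> M a \<union> M b" "a \<in> {1..l}" "b \<in> {1..l}"
    and q: "q \<in> V" "q \<in> closure (M a)" "q \<in> closure (M b)"
  shows "adjacent_regions q = {a, b}"
proof
  show "{a, b} \<subseteq> adjacent_regions q"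
    using assms(3,4) q by (simp add: adjacent_regions_def)
  show "adjacent_regions q \<subseteq> {a, b}"
  proof
    fix c assume "c \<in> adjacent_regions q"
    then have "c \<in> {1..l}" "M c \<inter> V \<noteq> {}"
      using q(1) \<open>open V\<close> open_Int_closure_eq_empty[of V "M c"] by (auto simp: adjacent_regions_def)
    then obtain z where "z \<in> M c" "z \<in> V"
      by blast
    then have "z \<in> M a \<union> M b"
      using region_Int_interface[OF \<open>c \<in> {1..l}\<close>] assms(2) by blast
    then show "c \<in> {a, b}"
      using \<open>z \<in> M c\<close> disj_M \<open>c \<in> {1..l}\<close> assms(3,4) by blast
  qed
qed

lemma interface_between_regions:
  assumes ab: "a \<in> {1..l}" "b \<in> {1..l}" "a \<noteq> b"
    and W: "open W" "convex W" "M a \<inter> W \<noteq> {}" "M b \<inter> W \<noteq> {}"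
  shows "\<exists>p\<in>interface \<inter> W. a \<in> adjacent_regions p"
proof -
  have "M i \<inter> box 0 One \<inter> W \<noteq> {}" if "i \<in> {1..l}" "M i \<inter> W \<noteq> {}" for i
  proof -
    have "closure (M i \<inter> box 0 One) \<inter> W \<noteq> {}"
      using that closure_region_Int_box closure_subset by blast
    then show ?thesis
      using open_Int_closure_eq_empty[OF W(1)] by (simp add: Int_commute)
  qed
  then obtain a1 b1 where a1: "a1 \<in> M a \<inter> box 0 One \<inter> W" and b1: "b1 \<in> M b \<inter> box 0 One \<inter> W"
    using ab W by blast
  let ?L = "closed_segment a1 b1"
  have "connected ?L" "?L \<subseteq> box 0 One \<inter> W"
    using a1 b1 closed_segment_subset[of a1 "box 0 One \<inter> W" b1] convex_Int[OF convex_box(2) W(2)]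
    by auto
  have "\<exists>p\<in>?L. p \<in> closure (M a) \<and> p \<notin> M a"
  proof (rule ccontr)
    assume "\<not> ?thesis"
    then have "?L \<inter> M a = ?L \<inter> closure (M a)"
      using closure_subset by blast
    moreover have "openin (top_of_set ?L) (?L \<inter> M a)"
    proof -
      have "?L \<inter> M a = ?L \<inter> (M a \<inter> box 0 One)"
        using \<open>?L \<subseteq> box 0 One \<inter> W\<close> by blast
      then show ?thesis
        using open_region_Int_box[OF ab(1)] by (simp add: openin_open_Int)
    qed
    moreover have "closedin (top_of_set ?L) (?L \<inter> closure (M a))"
      by (simp add: closedin_closed_Int)
    ultimately have "?L \<inter> M a = {} \<or> ?L \<inter> M a = ?L"
      using \<open>connected ?L\<close> unfolding connected_clopen by metis
    moreover have "b1 \<notin> M a"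
      using b1 disj_M ab by blast
    ultimately show False
      using a1 by auto
  qed
  then obtain p where p: "p \<in> ?L" "p \<in> closure (M a)" "p \<notin> M a"
    by blast
  have "p \<in> box 0 One"
    using p(1) \<open>?L \<subseteq> box 0 One \<inter> W\<close> by blast
  then have "p \<in> interface"
    using p ab(1) interior_subset unfolding interface_def frontier_def by blast
  then show ?thesis
    using p ab(1) \<open>?L \<subseteq> box 0 One \<inter> W\<close> by (auto simp: adjacent_regions_def)
qed

end

locale regular_cube_partition = cube_partition M l for M :: "nat \<Rightarrow> 'a::euclidean_space set" and l +
  fixes R :: real
  assumes C11_interface: "C11_hypersurface interface"
    and reach_interface: "ereal R \<le> reach interface"
    and interface_far_from_boundary: "\<forall>p\<in>interface. \<forall>q\<in>frontier (cbox 0 One). R \<le> dist p q"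
    and R_pos: "0 < R"
begin

lemma closed_interface: "closed interface"
proof -
  have "closed ((\<Union>i\<in>{1..l}. frontier (M i)) \<inter> cbox 0 One)"
    by (intro closed_Int closed_UN) auto
  then have "closure interface \<subseteq> (\<Union>i\<in>{1..l}. frontier (M i)) \<inter> cbox 0 One"
    unfolding interface_def using box_subset_cbox by (intro closure_minimal) auto
  moreover have "z \<notin> frontier (cbox 0 One)" if "z \<in> closure interface" for z
  proof
    assume "z \<in> frontier (cbox 0 One)"
    moreover obtain p where "p \<in> interface" "dist p z < R"
      using \<open>z \<in> closure interface\<close> R_pos by (metis closure_approachable)
    ultimately show False
      using interface_far_from_boundary by fastforce
  qed
  ultimately have "closure interface \<subseteq> interface"
    by (auto simp: interface_def frontier_def)
  then show ?thesis
    using closure_subset_eq by blast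
qed

lemma compact_interface: "compact interface"
proof -
  have "bounded interface"
    by (rule bounded_subset[OF bounded_box[of 0 One]]) (simp add: interface_def)
  then show ?thesis
    using closed_interface by (simp add: compact_eq_bounded_closed)
qed

lemma interface_chart:
  assumes "p \<in> interface"
  obtains n r and f :: "'a \<Rightarrow> real" and f' where "norm n = 1" "0 < r" "ball p r \<subseteq> box 0 One"
    "\<And>y. y \<in> ball p r \<Longrightarrow> (f has_derivative f' y) (at y)" "\<And>y. y \<in> ball p r \<Longrightarrow> 0 < f' y n"
    "interface \<inter> ball p r = {y \<in> ball p r. f y = 0}"
proof -
  obtain U and f :: "'a \<Rightarrow> real" and f' L where "open U" "p \<in> U"
    and der: "\<forall>y\<in>U. (f has_derivative f' y) (at y)"
    and lip: "\<forall>y\<in>U. \<forall>z\<in>U. \<forall>v. \<bar>f' y v - f' z v\<bar> \<le> L * dist y z * norm v"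
    and nz: "\<forall>y\<in>U. \<exists>v. f' y v \<noteq> 0"
    and zero: "interface \<inter> U = {y\<in>U. f y = 0}"
    using C11_interface[unfolded C11_hypersurface_def, rule_format, OF assms] by blast
  obtain v where "f' p v \<noteq> 0"
    using nz \<open>p \<in> U\<close> by blast
  moreover have "open (U \<inter> box 0 One)" "p \<in> U \<inter> box 0 One"
    using \<open>open U\<close> \<open>p \<in> U\<close> assms by (auto simp: interface_def)
  ultimately obtain n r where n: "norm n = 1" "0 < r" and rU: "ball p r \<subseteq> U \<inter> box 0 One"
    and pos: "\<And>y. y \<in> ball p r \<Longrightarrow> 0 < f' y n"
    using positive_directional_derivative_nearby[of "U \<inter> box 0 One" p f f' L v] der lip by auto
  show ?thesis
  proof (rule that[where f = f and f' = f', OF n _ _ pos])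
    show "ball p r \<subseteq> box 0 One"
      using rU by blast
    have "interface \<inter> ball p r = interface \<inter> U \<inter> ball p r"
      using rU by blast
    then show "interface \<inter> ball p r = {y \<in> ball p r. f y = 0}"
      unfolding zero using rU by blast
    show "\<And>y. y \<in> ball p r \<Longrightarrow> (f has_derivative f' y) (at y)"
      using der rU by blast
  qed
qed

lemma interface_local_sides:
  assumes "p \<in> interface"
  shows "\<exists>V a b. open V \<and> p \<in> V \<and> (\<forall>q\<in>interface \<inter> V. adjacent_regions q = {a, b})"
proof -
  obtain n r and f :: "'a \<Rightarrow> real" and f' where n: "norm n = 1" "0 < r" and "ball p r \<subseteq> box 0 One"
    and der: "\<And>y. y \<in> ball p r \<Longrightarrow> (f has_derivative f' y) (at y)"
    and pos: "\<And>y. y \<in> ball p r \<Longrightarrow> 0 < f' y n"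
    and zero: "interface \<inter> ball p r = {y \<in> ball p r. f y = 0}"
    by (rule interface_chart[OF assms]) blast
  have "p \<in> interface \<inter> ball p r"
    using assms \<open>0 < r\<close> by simp
  then have "f p = 0"
    unfolding zero by simp
  then obtain V where V: "open V" "p \<in> V" "V \<subseteq> ball p r"
    and conn: "connected {z \<in> V. 0 < f z}" "connected {z \<in> V. f z < 0}"
    and sides: "\<And>q. q \<in> V \<Longrightarrow> f q = 0 \<Longrightarrow> q \<in> closure {z \<in> V. 0 < f z} \<inter> closure {z \<in> V. f z < 0}"
    using zero_set_local_sides[OF n _ der pos] by blast
  have off: "z \<notin> interface \<longleftrightarrow> f z \<noteq> 0" if "z \<in> V" for z
    using that V(3) zero by blast
  then have "{z \<in> V. 0 < f z} \<subseteq> box 0 One - interface" "{z \<in> V. f z < 0} \<subseteq> box 0 One - interface"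
    using V(3) \<open>ball p r \<subseteq> box 0 One\<close> by auto
  moreover have "{z \<in> V. 0 < f z} \<noteq> {}" "{z \<in> V. f z < 0} \<noteq> {}"
    using sides[OF V(2) \<open>f p = 0\<close>] by (metis IntD1 IntD2 closure_empty empty_iff)+
  ultimately obtain a b where "a \<in> {1..l}" "{z \<in> V. 0 < f z} \<subseteq> M a" "b \<in> {1..l}" "{z \<in> V. f z < 0} \<subseteq> M b"
    using connected_subset_some_region conn by meson
  have "adjacent_regions q = {a, b}" if "q \<in> interface \<inter> V" for q
  proof (rule adjacent_regions_eq_pair[OF V(1) _ \<open>a \<in> {1..l}\<close> \<open>b \<in> {1..l}\<close>])
    show "V - interface \<subseteq> M a \<union> M b"
      using \<open>{z \<in> V. 0 < f z} \<subseteq> M a\<close> \<open>{z \<in> V. f z < 0} \<subseteq> M b\<close> off by fastforce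
    have "f q = 0"
      using that off by blast
    then show "q \<in> V" "q \<in> closure (M a)" "q \<in> closure (M b)"
      using that sides closure_mono[OF \<open>{z \<in> V. 0 < f z} \<subseteq> M a\<close>]
        closure_mono[OF \<open>{z \<in> V. f z < 0} \<subseteq> M b\<close>] by blast+
  qed
  then show ?thesis
    using V(1,2) by blast
qed

lemma adjacent_regions_const_on_connected:
  assumes "connected C" "C \<subseteq> interface" "p \<in> C" "q \<in> C"
  shows "adjacent_regions p = adjacent_regions q"
proof (rule connected_local_const[OF assms(1,3,4)])
  show "\<forall>a\<in>C. \<forall>\<^sub>F b in at a within C. adjacent_regions a = adjacent_regions b"
  proof
    fix a assume "a \<in> C"
    then have "a \<in> interface"
      using assms(2) by blast
    then obtain V i j where "open V" "a \<in> V" and const: "\<forall>q\<in>interface \<inter> V. adjacent_regions q = {i, j}"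
      using interface_local_sides by meson
    have "\<forall>b\<in>V. b \<noteq> a \<longrightarrow> b \<in> C \<longrightarrow> adjacent_regions a = adjacent_regions b"
      using const \<open>a \<in> interface\<close> \<open>a \<in> V\<close> assms(2) by auto
    then show "\<forall>\<^sub>F b in at a within C. adjacent_regions a = adjacent_regions b"
      unfolding eventually_at_topological using \<open>open V\<close> \<open>a \<in> V\<close> by blast
  qed
qed

lemma adjacent_regions_eq_if_close:
  assumes "p \<in> interface" "q \<in> interface" "dist p q < 2 * R"
  shows "adjacent_regions p = adjacent_regions q"
proof -
  let ?T = "closed_segment p q"
  let ?nearest = "\<lambda>y z. z \<in> interface \<and> (\<forall>b\<in>interface. dist y z \<le> dist y b)"
  define P where "P y = (THE z. ?nearest y z)" for y
  have uniq: "\<exists>!z. ?nearest y z" if "y \<in> ?T" for y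
  proof -
    have "dist p y + dist y q = dist p q"
      using that by (simp add: between_mem_segment[symmetric] between)
    then have "dist y p < R \<or> dist y q < R"
      using assms(3) by (auto simp: dist_commute)
    then show ?thesis
      using unique_nearest_point_within_reach[OF reach_interface] assms(1,2) by blast
  qed
  have P_fixes: "P y = y" if "y \<in> ?T" "y \<in> interface" for y
    unfolding P_def using that by (intro the1_equality[OF uniq]) auto
  have "continuous_on ?T P"
    unfolding P_def using compact_interface closed_segment uniq by (rule continuous_on_unique_nearest_point)
  then have "connected (P ` ?T)"
    using connected_segment by (rule connected_continuous_image)
  moreover have "P ` ?T \<subseteq> interface"
    unfolding P_def using theI'[OF uniq] by blast
  moreover have "p \<in> P ` ?T"
    using P_fixes[of p] assms(1) by (metis ends_in_segment(1) rev_image_eqI)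
  moreover have "q \<in> P ` ?T"
    using P_fixes[of q] assms(2) by (metis ends_in_segment(2) rev_image_eqI)
  ultimately show ?thesis
    by (rule adjacent_regions_const_on_connected)
qed

lemma adjacent_regions_pair: "p \<in> interface \<Longrightarrow> \<exists>i\<in>{1..l}. \<exists>j\<in>{1..l}. adjacent_regions p = {i, j}"
  using interface_local_sides[of p] by (fastforce simp: adjacent_regions_def)

lemma region_meeting_ball_adjacent:
  assumes "h < R" "p \<in> interface \<inter> ball x h" "c \<in> {1..l}" "M c \<inter> ball x h \<noteq> {}"
  shows "c \<in> adjacent_regions p"
proof -
  obtain a where "a \<in> {1..l}" "p \<in> closure (M a)"
    using assms(2) by (auto simp: interface_def frontier_def)
  then have a: "a \<in> adjacent_regions p" "M a \<inter> ball x h \<noteq> {}"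
    using assms(2) open_Int_closure_eq_empty[of "ball x h" "M a"] by (auto simp: adjacent_regions_def)
  show ?thesis
  proof (cases "c = a")
    case False
    then obtain q where q: "q \<in> interface \<inter> ball x h" "c \<in> adjacent_regions q"
      using interface_between_regions[OF assms(3) \<open>a \<in> {1..l}\<close> _ open_ball convex_ball] assms(4) a(2)
      by blast
    have "dist p q \<le> dist p x + dist x q"
      by (rule dist_triangle)
    also have "\<dots> < 2 * R"
      using assms(1,2) q(1) by (simp add: dist_commute)
    finally show ?thesis
      using adjacent_regions_eq_if_close assms(2) q by blast
  qed (use a in simp)
qed

lemma regions_meeting_ball:
  assumes "h < R"
  shows "\<exists>i\<in>{1..l}. \<exists>j\<in>{1..l}. \<forall>c\<in>{1..l}. M c \<inter> ball x h \<noteq> {} \<longrightarrow> c \<in> {i, j}"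
proof (cases "interface \<inter> ball x h = {}")
  case False
  then obtain p where p: "p \<in> interface \<inter> ball x h"
    by blast
  then obtain i j where "i \<in> {1..l}" "j \<in> {1..l}" "adjacent_regions p = {i, j}"
    using adjacent_regions_pair by blast
  moreover have "c \<in> adjacent_regions p" if "c \<in> {1..l}" "M c \<inter> ball x h \<noteq> {}" for c
    using region_meeting_ball_adjacent[OF assms p that] .
  ultimately show ?thesis
    by blast
next
  case no_interface: True
  show ?thesis
  proof (cases "\<exists>a\<in>{1..l}. M a \<inter> ball x h \<noteq> {}")
    case True
    then obtain a where a: "a \<in> {1..l}" "M a \<inter> ball x h \<noteq> {}"
      by blast
    have "c = a" if "c \<in> {1..l}" "M c \<inter> ball x h \<noteq> {}" for c
      using interface_between_regions[OF that(1) a(1) _ open_ball convex_ball that(2) a(2)] no_interface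
      by blast
    then show ?thesis
      using a(1) by blast
  next
    case False
    then show ?thesis
      using regions_nonempty by blast
  qed
qed

end

theorem lemma11:
  fixes M :: "nat \<Rightarrow> 'a::euclidean_space set" and l :: nat and R h :: real and x :: 'a
  assumes open_M: "\<forall>i\<in>{1..l}. openin (top_of_set (cbox 0 One)) (M i)"
    and disj_M: "\<forall>i\<in>{1..l}. \<forall>j\<in>{1..l}. i \<noteq> j \<longrightarrow> M i \<inter> M j = {}"
    and cover: "(\<Union>i\<in>{1..l}. closure (M i)) = cbox 0 One"
    and hyp: "C11_hypersurface ((\<Union>i\<in>{1..l}. frontier (M i)) \<inter> box 0 One)"
    and reach: "reach ((\<Union>i\<in>{1..l}. frontier (M i)) \<inter> box 0 One) \<ge> ereal R"
    and bdist: "\<forall>p\<in>(\<Union>i\<in>{1..l}. frontier (M i)) \<inter> box 0 One.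
                  \<forall>q\<in>frontier (cbox 0 One). R \<le> dist p q"
    and x: "x \<in> cbox 0 One"
    and h: "0 < h" "h < R"
  shows "\<exists>i\<in>{1..l}. \<exists>j\<in>{1..l}.
           cball x h \<inter> cbox 0 One \<subseteq> closure (M i) \<union> closure (M j)"
proof -
  interpret regular_cube_partition M l R
    using open_M disj_M cover hyp reach bdist h
    by unfold_locales (simp_all add: cube_partition.interface_def cube_partition_def)
  obtain i j where "i \<in> {1..l}" "j \<in> {1..l}"
    and ij: "\<forall>c\<in>{1..l}. M c \<inter> ball x h \<noteq> {} \<longrightarrow> c \<in> {i, j}"
    using regions_meeting_ball[OF \<open>h < R\<close>] by blast
  have "ball x h \<inter> cbox 0 One \<subseteq> closure (M i) \<union> closure (M j)"
  proof
    fix y assume y: "y \<in> ball x h \<inter> cbox 0 One"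
    then obtain c where "c \<in> {1..l}" "y \<in> closure (M c)"
      using cover by blast
    moreover have "M c \<inter> ball x h \<noteq> {}"
      using y calculation(2) open_Int_closure_eq_empty[of "ball x h" "M c"] by blast
    ultimately show "y \<in> closure (M i) \<union> closure (M j)"
      using ij by blast
  qed
  then have "closure (ball x h \<inter> cbox 0 One) \<subseteq> closure (M i) \<union> closure (M j)"
    by (rule closure_minimal) (simp add: closed_Un)
  moreover have "cball x h \<inter> cbox 0 One \<subseteq> closure (ball x h \<inter> cbox 0 One)"
    using convex_box(1) x \<open>0 < h\<close> by (rule cball_Int_convex_subset_closure)
  ultimately show ?thesis
    using \<open>i \<in> {1..l}\<close> \<open>j \<in> {1..l}\<close> by blast
qed

end
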